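(* Let $\mathcal Z$ be a sequence in $\mathbb D$ that is separated in the pseudo-hyperbolic metric. Then $D^+(\mathcal Z)=S^+(\mathcal Z)$, where $$D^+(\mathcal Z)=\limsup_{r\to1}\frac{\sup_{b\in\mathbb D}\sum_{a\in M_b(\mathcal Z),\,|a|<r}\frac{1-|a|^2}{2}}{\log\frac1{1-r^2}},\qquad S^+(\mathcal Z)=\limsup_{r\to1}\frac{\sup_{b\in\mathbb D}\frac1{2\pi}\int_0^{2\pi}k_{M_b(\mathcal Z)}(re^{i\theta})\,d\theta}{\log\frac1{1-r^2}}.$$
   Context: $\mathbb D$ is the open unit disk; $\psi(z,w)=\left|\frac{z-w}{1-\bar wz}\right|$; separated means $\inf\{\psi(a,b):a\ne b\in\mathcal Z\}>0$. $M_b(z)=\frac{b-z}{1-\bar bz}$ and $M_b(\mathcal Z)=\{M_b(a):a\in\mathcal Z\}$. For a sequence $\mathcal W$ with $\sum_{a\in\mathcal W}(1-|a|^2)^2<\infty$, $k_{\mathcal W}(z)=\frac{|z|^2}{2}\sum_{a\in\mathcal W}\frac{(1-|a|^2)^2}{|1-\bar az|^2}$; note $\frac1{2\pi}\int_0^{2\pi}k_{\mathcal W}(re^{i\theta})d\theta=\frac{r^2}{2}\sum_{a\in\mathcal W}\frac{(1-|a|^2)^2}{1-|a|^2r^2}$. *)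

theory Defs
  imports "HOL-Analysis.Analysis"
begin

definition psi :: "complex \<Rightarrow> complex \<Rightarrow> real" where
  "psi z w = norm ((z - w) / (1 - cnj w * z))"

definition separated :: "complex set \<Rightarrow> bool" where
  "separated Z \<longleftrightarrow> (\<exists>\<delta>>0. \<forall>a\<in>Z. \<forall>b\<in>Z. a \<noteq> b \<longrightarrow> \<delta> \<le> psi a b)"

definition Mob :: "complex \<Rightarrow> complex \<Rightarrow> complex" where
  "Mob b z = (b - z) / (1 - cnj b * z)"

definition kfun :: "complex set \<Rightarrow> complex \<Rightarrow> real" where
  "kfun W z = (norm z)\<^sup>2 / 2 *
     (\<Sum>\<^sub>\<infinity>a\<in>W. (1 - (norm a)\<^sup>2)\<^sup>2 / (norm (1 - cnj a * z))\<^sup>2)"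

definition upper_density :: "complex set \<Rightarrow> ereal" where
  "upper_density Z = Limsup (at_left 1) (\<lambda>r::real.
     (SUP b\<in>ball 0 1. ereal (\<Sum>a\<in>{a\<in>Mob b ` Z. norm a < r}. (1 - (norm a)\<^sup>2) / 2))
     / ereal (ln (1 / (1 - r\<^sup>2))))"

definition upper_S :: "complex set \<Rightarrow> ereal" where
  "upper_S Z = Limsup (at_left 1) (\<lambda>r::real.
     (SUP b\<in>ball 0 1. ereal (1 / (2 * pi) *
        integral {0..2*pi} (\<lambda>\<theta>. kfun (Mob b ` Z) (complex_of_real r * cis \<theta>))))
     / ereal (ln (1 / (1 - r\<^sup>2))))"

end

theory Submission
  imports Defs "HOL-Complex_Analysis.Riemann_Mapping" "HOL-Real_Asymp.Real_Asymp"
begin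

(*
  The Moebius map M_b preserves psi, so every M_b(Z) is separated with the same constant delta.
  For a delta-separated set W in the disk, at most C(delta) 2^k points satisfy
  2^(-k-1) < 1 - |a| <= 2^(-k) (a polar grid argument). Hence W has O(1/(1 - r)) points in
  the disk of radius r, and the sum of (1 - |a|)^2 over the points outside it is O(1 - r).
  The circle mean of k_W at radius r is (r^2/2) sum_a (1 - |a|^2)^2 / (1 - |a|^2 r^2); a point
  with |a| < r contributes at most (1 - r^2)/2 more to the counting sum than to this mean, and
  a point with |a| >= r contributes O((1 - |a|)^2 / (1 - r)) to the mean. So the two sums
  differ by at most a constant depending only on delta, uniformly in b and r, and dividing by
  log (1/(1 - r^2)), which tends to infinity, the two upper limits coincide.
*)

section \<open>Disk automorphisms and separation\<close>

lemma one_minus_cnj_mult_nonzero: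
  assumes "norm b < 1" "norm z < 1"
  shows "1 - cnj b * z \<noteq> 0"
proof -
  have "norm (cnj b * z) < 1"
    using assms by (simp add: norm_mult) (metis mult_strict_mono' norm_ge_zero mult_1 less_imp_le)
  then show ?thesis by auto
qed

lemma norm_Mob_less_1:
  assumes "norm b < 1" "norm z < 1"
  shows "norm (Mob b z) < 1"
proof -
  have "Mob b z = - Moebius_function 0 b z"
    by (simp add: Mob_def Moebius_function_simple minus_divide_left)
  then show ?thesis
    using Moebius_function_norm_lt_1[OF assms] by simp
qed

lemma psi_Mob:
  assumes b: "norm b < 1" and z: "norm z < 1" and w: "norm w < 1"
  shows "psi (Mob b z) (Mob b w) = psi z w"
proof -
  have nz: "1 - cnj b * z \<noteq> 0" "1 - cnj b * w \<noteq> 0" "1 - cnj w * z \<noteq> 0" "1 - cnj b * b \<noteq> 0"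
    using one_minus_cnj_mult_nonzero assms by blast+
  have nw': "1 - b * cnj w \<noteq> 0"
    using nz(2) by (metis complex_cnj_cnj complex_cnj_diff complex_cnj_mult complex_cnj_one complex_cnj_zero_iff)
  have num: "Mob b z - Mob b w = (w - z) * (1 - cnj b * b) / ((1 - cnj b * z) * (1 - cnj b * w))"
    using nz by (simp add: Mob_def divide_simps) (simp add: algebra_simps)
  have den: "1 - cnj (Mob b w) * Mob b z
      = (1 - cnj b * b) * (1 - cnj w * z) / ((1 - b * cnj w) * (1 - cnj b * z))"
    using nz nw' by (simp add: Mob_def divide_simps) (simp add: algebra_simps)
  have "(Mob b z - Mob b w) / (1 - cnj (Mob b w) * Mob b z)
      = (w - z) * (1 - b * cnj w) / ((1 - cnj b * w) * (1 - cnj w * z))"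
  proof -
    have cancel: "X * E / (A * B) / (E * D / (C * A)) = X * C / (B * D)"
      if "A \<noteq> 0" "B \<noteq> 0" "C \<noteq> 0" "D \<noteq> 0" "E \<noteq> 0" for X A B C D E :: complex
      using that by (simp add: field_simps)
    show ?thesis
      unfolding num den by (rule cancel) (use nz nw' in auto)
  qed
  moreover have "norm (1 - b * cnj w) = norm (1 - cnj b * w)"
    by (metis complex_cnj_cnj complex_cnj_diff complex_cnj_mult complex_cnj_one complex_mod_cnj)
  ultimately show ?thesis
    using nz(2) by (simp add: psi_def norm_mult norm_divide norm_minus_commute)
qed

definition separated_by :: "real \<Rightarrow> complex set \<Rightarrow> bool" where
  "separated_by \<delta> W \<longleftrightarrow> (\<forall>a\<in>W. \<forall>c\<in>W. a \<noteq> c \<longrightarrow> \<delta> \<le> psi a c)"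

lemma separated_iff_separated_by: "separated Z \<longleftrightarrow> (\<exists>\<delta>>0. separated_by \<delta> Z)"
  by (simp add: separated_def separated_by_def)

lemma separated_by_Mob_image:
  assumes "b \<in> ball 0 1" "Z \<subseteq> ball 0 1" "separated_by \<delta> Z"
  shows "separated_by \<delta> (Mob b ` Z)"
  unfolding separated_by_def
proof (intro ballI impI)
  fix a c assume "a \<in> Mob b ` Z" "c \<in> Mob b ` Z" "a \<noteq> c"
  then obtain z w where "z \<in> Z" "w \<in> Z" "z \<noteq> w" and ac: "a = Mob b z" "c = Mob b w"
    by blast
  then have "\<delta> \<le> psi z w"
    using assms(3) by (simp add: separated_by_def)
  also have "psi z w = psi a c"
    unfolding ac using assms \<open>z \<in> Z\<close> \<open>w \<in> Z\<close> by (subst psi_Mob) auto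
  finally show "\<delta> \<le> psi a c" .
qed

section \<open>Counting the points of a separated set\<close>

lemma norm_cis_diff_le: "norm (cis s - cis t) \<le> \<bar>s - t\<bar>"
proof -
  have "(norm (cis s - cis t))\<^sup>2 = (cos s - cos t)\<^sup>2 + (sin s - sin t)\<^sup>2"
    by (simp add: cmod_power2)
  also have "\<dots> = 2 - 2 * cos (s - t)"
    by (simp add: cos_diff power2_eq_square algebra_simps)
  also have "\<dots> = 4 * (sin ((s - t) / 2))\<^sup>2"
  proof -
    have half: "2 * ((s - t) / 2) = s - t" by simp
    show ?thesis using cos_double_sin[of "(s - t) / 2", unfolded half] by simp
  qed
  also have "\<dots> \<le> 4 * ((s - t) / 2)\<^sup>2"
    using abs_sin_x_le_abs_x[of "(s - t) / 2"] by (simp add: abs_le_square_iff del: abs_divide)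
  finally have "(norm (cis s - cis t))\<^sup>2 \<le> \<bar>s - t\<bar>\<^sup>2"
    by (simp add: power_divide)
  then show ?thesis
    by (rule power2_le_imp_le) simp
qed

lemma norm_diff_le_polar:
  assumes "norm c \<le> 1"
  shows "norm (a - c) \<le> \<bar>norm a - norm c\<bar> + \<bar>Arg a - Arg c\<bar>"
proof -
  have "a - c = of_real (norm a - norm c) * cis (Arg a) + of_real (norm c) * (cis (Arg a) - cis (Arg c))"
    using rcis_cmod_Arg[of a] rcis_cmod_Arg[of c] unfolding rcis_def by (simp add: algebra_simps)
  then have "norm (a - c)
      \<le> norm (of_real (norm a - norm c) * cis (Arg a)) + norm (of_real (norm c) * (cis (Arg a) - cis (Arg c)))"
    by (metis norm_triangle_ineq)
  also have "\<dots> = \<bar>norm a - norm c\<bar> + norm c * norm (cis (Arg a) - cis (Arg c))"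
    by (simp only: norm_mult norm_of_real norm_cis) simp
  also have "\<dots> \<le> \<bar>norm a - norm c\<bar> + 1 * \<bar>Arg a - Arg c\<bar>"
    using assms norm_cis_diff_le by (intro add_left_mono mult_mono) simp_all
  finally show ?thesis by simp
qed

lemma norm_one_minus_cnj_mult_ge:
  assumes "norm c \<le> 1"
  shows "1 - norm a \<le> norm (1 - cnj c * a)"
proof -
  have "norm (cnj c * a) \<le> norm a"
    using assms by (simp add: norm_mult mult_left_le_one_le)
  then show ?thesis
    using norm_triangle_ineq2[of 1 "cnj c * a"] by simp
qed

definition dyadic_level :: "complex \<Rightarrow> nat" where
  "dyadic_level a = (LEAST k. 1 < 2 ^ Suc k * (1 - norm a))"

lemma dyadic_level_bounds:
  assumes "norm a < 1"
  shows "2 ^ dyadic_level a * (1 - norm a) \<le> 1" "1 < 2 ^ Suc (dyadic_level a) * (1 - norm a)"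
proof -
  obtain n where n: "1 / (1 - norm a) < 2 ^ n"
    using real_arch_pow[of 2] by auto
  then have "1 < 2 ^ n * (1 - norm a)"
    using assms by (simp add: divide_less_eq)
  also have "\<dots> \<le> 2 ^ Suc n * (1 - norm a)"
    using assms by (intro mult_right_mono) auto
  finally show "1 < 2 ^ Suc (dyadic_level a) * (1 - norm a)"
    unfolding dyadic_level_def by (rule LeastI)
  show "2 ^ dyadic_level a * (1 - norm a) \<le> 1"
  proof (cases "dyadic_level a")
    case (Suc j)
    then have "\<not> 1 < 2 ^ Suc j * (1 - norm a)"
      unfolding dyadic_level_def by (metis lessI not_less_Least)
    then show ?thesis using Suc by simp
  qed (use assms in simp)
qed

lemma psi_le_polar:
  assumes "norm a < 1" "norm c \<le> 1"
  shows "psi a c \<le> (\<bar>norm a - norm c\<bar> + \<bar>Arg a - Arg c\<bar>) / (1 - norm a)"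
proof -
  have "psi a c = norm (a - c) / norm (1 - cnj c * a)"
    by (simp add: psi_def norm_divide)
  also have "\<dots> \<le> (\<bar>norm a - norm c\<bar> + \<bar>Arg a - Arg c\<bar>) / (1 - norm a)"
    using assms norm_diff_le_polar norm_one_minus_cnj_mult_ge by (intro frac_le) auto
  finally show ?thesis .
qed

definition polar_cell :: "nat \<Rightarrow> complex \<Rightarrow> int \<times> int" where
  "polar_cell m a = (\<lfloor>m * norm a\<rfloor>, \<lfloor>m * (Arg a + pi) / (2 * pi)\<rfloor>)"

lemma polar_cell_eqD:
  assumes "polar_cell m a = polar_cell m c" "0 < m"
  shows "\<bar>norm a - norm c\<bar> < 1 / m" "\<bar>Arg a - Arg c\<bar> < 2 * pi / m"
proof -
  have floor_close: "\<bar>x - y\<bar> < 1" if "\<lfloor>x\<rfloor> = \<lfloor>y\<rfloor>" for x y :: real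
    using that by linarith
  have "\<bar>m * norm a - m * norm c\<bar> < 1"
    using assms(1) unfolding polar_cell_def by (intro floor_close) simp
  then have "m * \<bar>norm a - norm c\<bar> < 1"
    by (simp add: abs_mult flip: right_diff_distrib)
  then show "\<bar>norm a - norm c\<bar> < 1 / m"
    using assms(2) by (simp add: field_simps)
  have "\<bar>m * (Arg a + pi) / (2 * pi) - m * (Arg c + pi) / (2 * pi)\<bar> < 1"
    using assms(1) unfolding polar_cell_def by (intro floor_close) simp
  moreover have "m * (Arg a + pi) / (2 * pi) - m * (Arg c + pi) / (2 * pi) = m / (2 * pi) * (Arg a - Arg c)"
    by (simp add: field_simps)
  ultimately have "m / (2 * pi) * \<bar>Arg a - Arg c\<bar> < 1"
    by (simp add: abs_mult)
  then show "\<bar>Arg a - Arg c\<bar> < 2 * pi / m"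
    using assms(2) by (simp add: field_simps)
qed

lemma polar_cell_mem:
  assumes "norm a \<le> 1" "m * (1 - norm a) \<le> j"
  shows "polar_cell m a \<in> {int m - int j .. int m} \<times> {0 .. int m}"
proof -
  have "real m - j \<le> m * norm a" "m * norm a \<le> m"
    using assms by (auto simp: algebra_simps mult_left_le)
  moreover have arg: "0 \<le> (Arg a + pi) / (2 * pi)" "(Arg a + pi) / (2 * pi) \<le> 1"
    using mpi_less_Arg[of a] Arg_le_pi[of a] by (auto simp: field_simps)
  have "0 \<le> m * ((Arg a + pi) / (2 * pi))"
    using arg by (intro mult_nonneg_nonneg) auto
  moreover have "m * ((Arg a + pi) / (2 * pi)) \<le> m"
    using arg by (intro mult_left_le) auto
  ultimately show ?thesis
    unfolding polar_cell_def by (auto simp: le_floor_iff floor_le_iff)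
qed

text \<open>A polar cell of mesh \<open>2\<^sup>-\<^sup>k/n\<close> contains at most one point of level \<open>k\<close>, because its
  pseudo-hyperbolic diameter there is below \<open>(2 + 4\<pi>)/n\<close>; and only \<open>(n + 1)(n 2\<^sup>k + 1)\<close> cells
  meet the annulus of level \<open>k\<close>.\<close>
lemma card_dyadic_level_le:
  assumes W: "W \<subseteq> ball 0 1" and sep: "separated_by \<delta> W"
    and n: "n > 0" "(2 + 4 * pi) / n \<le> \<delta>"
  shows "finite {a\<in>W. dyadic_level a = k}" "card {a\<in>W. dyadic_level a = k} \<le> (n + 1)\<^sup>2 * 2 ^ k"
proof -
  define L where "L = {a\<in>W. dyadic_level a = k}"
  define m where "m = n * 2 ^ k"
  define G where "G = {int m - int n .. int m} \<times> {0 .. int m}"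
  have L: "norm a < 1" "2 ^ k * (1 - norm a) \<le> 1" "1 < 2 ^ Suc k * (1 - norm a)" if "a \<in> L" for a
    using that W dyadic_level_bounds[of a] unfolding L_def by auto
  have inj: "inj_on (polar_cell m) L"
  proof (rule inj_onI, rule ccontr)
    fix a c assume a: "a \<in> L" and c: "c \<in> L" and same: "polar_cell m a = polar_cell m c" and "a \<noteq> c"
    have "0 < m"
      using n by (simp add: m_def)
    have "psi a c \<le> (\<bar>norm a - norm c\<bar> + \<bar>Arg a - Arg c\<bar>) / (1 - norm a)"
      using L(1)[OF a] L(1)[OF c] by (intro psi_le_polar) auto
    also have "\<dots> < (1 + 2 * pi) / m / (1 - norm a)"
      using polar_cell_eqD[OF same \<open>0 < m\<close>] L(1)[OF a] by (intro divide_strict_right_mono) (auto simp: add_divide_distrib)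
    also have "\<dots> = (1 + 2 * pi) / m * (1 / (1 - norm a))"
      by simp
    also have "\<dots> < (1 + 2 * pi) / m * 2 ^ Suc k"
      using L(1,3)[OF a] \<open>0 < m\<close> by (intro mult_strict_left_mono) (auto simp: field_simps add_pos_pos)
    also have "\<dots> = (2 + 4 * pi) / n"
      using n by (simp add: m_def field_simps)
    finally show False
      using n(2) sep a c \<open>a \<noteq> c\<close> unfolding separated_by_def L_def by fastforce
  qed
  have sub: "polar_cell m ` L \<subseteq> G"
  proof (rule image_subsetI)
    fix a assume "a \<in> L"
    have "n * (2 ^ k * (1 - norm a)) \<le> real n * 1"
      using L(2)[OF \<open>a \<in> L\<close>] by (intro mult_left_mono) auto
    then show "polar_cell m a \<in> G"
      unfolding G_def using L(1)[OF \<open>a \<in> L\<close>] by (intro polar_cell_mem) (auto simp: m_def mult.assoc)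
  qed
  have G: "finite G" "card G = (n + 1) * (n * 2 ^ k + 1)"
    unfolding G_def m_def by (simp_all add: card_cartesian_product nat_add_distrib nat_mult_distrib nat_power_eq)
  then show "finite {a\<in>W. dyadic_level a = k}"
    using inj sub unfolding L_def by (metis finite_imageD finite_subset)
  have "card {a\<in>W. dyadic_level a = k} \<le> (n + 1) * (n * 2 ^ k + 1)"
    using card_inj_on_le[OF inj sub] G unfolding L_def by simp
  also have "\<dots> \<le> (n + 1) * ((n + 1) * 2 ^ k)"
    using one_le_power[of "2::nat" k] by (intro mult_le_mono2) simp
  also have "\<dots> = (n + 1)\<^sup>2 * 2 ^ k"
    by (simp only: power2_eq_square mult.assoc)
  finally show "card {a\<in>W. dyadic_level a = k} \<le> (n + 1)\<^sup>2 * 2 ^ k" .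
qed

lemma sum_power2_le:
  fixes \<rho> :: real
  assumes "finite S" "0 < \<rho>" "\<And>k. k \<in> S \<Longrightarrow> 2 ^ k * \<rho> < 1"
  shows "(\<Sum>k\<in>S. 2 ^ k) \<le> 2 / \<rho>"
proof (cases "S = {}")
  case False
  define m where "m = Max S"
  have "m \<in> S" "S \<subseteq> {..m}"
    using False assms(1) unfolding m_def by auto
  then have "(\<Sum>k\<in>S. 2 ^ k) \<le> (\<Sum>k\<le>m. (2::real) ^ k)"
    by (intro sum_mono2) auto
  also have "\<dots> \<le> 2 * 2 ^ m"
    by (simp add: sum_gp0)
  also have "\<dots> \<le> 2 / \<rho>"
    using assms(2) assms(3)[OF \<open>m \<in> S\<close>] by (simp add: field_simps)
  finally show ?thesis .
qed (use assms in simp)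

lemma sum_power_half_le:
  fixes \<rho> :: real
  assumes "finite S" "0 < \<rho>" "\<And>k. k \<in> S \<Longrightarrow> 1 < 2 ^ Suc k * \<rho>"
  shows "(\<Sum>k\<in>S. (1/2) ^ k) \<le> 4 * \<rho>"
proof (cases "S = {}")
  case False
  define m where "m = Min S"
  define M where "M = Max S"
  have "m \<in> S" "S \<subseteq> {m..M}"
    using False assms(1) unfolding m_def M_def by auto
  then have "(\<Sum>k\<in>S. (1/2) ^ k) \<le> (\<Sum>k=m..M. (1/2::real) ^ k)"
    by (intro sum_mono2) auto
  also have "\<dots> = ((1/2) ^ m - (1/2) ^ Suc M) / (1 - 1/2)"
    using \<open>m \<in> S\<close> \<open>S \<subseteq> {m..M}\<close> by (subst sum_gp) auto
  also have "\<dots> \<le> 2 * (1/2) ^ m"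
    by simp
  also have "\<dots> \<le> 4 * \<rho>"
    using assms(3)[OF \<open>m \<in> S\<close>] by (simp add: power_one_over field_simps)
  finally show ?thesis .
qed (use assms in simp)

lemma one_minus_norm_sq_sq_le:
  fixes a :: "'a::real_normed_vector"
  assumes "norm a \<le> 1"
  shows "(1 - (norm a)\<^sup>2)\<^sup>2 \<le> 4 * (1 - norm a)\<^sup>2"
proof -
  have "1 - (norm a)\<^sup>2 = (1 - norm a) * (1 + norm a)"
    by (simp add: power2_eq_square algebra_simps)
  also have "\<dots> \<le> (1 - norm a) * 2"
    using assms by (intro mult_left_mono) auto
  finally have "1 - (norm a)\<^sup>2 \<le> 2 * (1 - norm a)"
    by simp
  moreover have "0 \<le> 1 - (norm a)\<^sup>2"
    using assms by (simp add: abs_square_le_1)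
  ultimately have "(1 - (norm a)\<^sup>2)\<^sup>2 \<le> (2 * (1 - norm a))\<^sup>2"
    by (intro power_mono) auto
  also have "\<dots> = 4 * (1 - norm a)\<^sup>2"
    by (simp only: power_mult_distrib) simp
  finally show ?thesis .
qed

text \<open>The constant \<open>(n + 1)\<^sup>2\<close> of \<open>card_dyadic_level_le\<close> for the least \<open>n\<close> with
  \<open>(2 + 4\<pi>)/n \<le> \<delta>\<close>.\<close>
definition level_const :: "real \<Rightarrow> real" where
  "level_const \<delta> = real ((nat \<lceil>(2 + 4 * pi) / \<delta>\<rceil> + 1)\<^sup>2)"

lemma level_const_pos: "0 < level_const \<delta>"
  by (simp add: level_const_def)

locale separated_disk_set =
  fixes W :: "complex set" and \<delta> :: real
  assumes in_disk: "W \<subseteq> ball 0 1" and pos: "0 < \<delta>" and sep: "separated_by \<delta> W"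
begin

lemma norm_less_1: "a \<in> W \<Longrightarrow> norm a < 1"
  using in_disk by auto

lemma dyadic_level_count:
  "finite {a\<in>W. dyadic_level a = k}" "card {a\<in>W. dyadic_level a = k} \<le> level_const \<delta> * 2 ^ k"
proof -
  define n where "n = nat \<lceil>(2 + 4 * pi) / \<delta>\<rceil>"
  have "(2 + 4 * pi) / \<delta> \<le> n"
    unfolding n_def by linarith
  moreover have "0 < (2 + 4 * pi) / \<delta>"
    using pos by (simp add: pi_gt_zero add_pos_pos)
  ultimately have "0 < real n"
    by linarith
  moreover have "2 + 4 * pi \<le> n * \<delta>"
    using \<open>(2 + 4 * pi) / \<delta> \<le> n\<close> pos by (simp add: divide_le_eq)
  ultimately have "0 < n" "(2 + 4 * pi) / n \<le> \<delta>"
    by (simp_all add: divide_le_eq mult.commute)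
  then have "finite {a\<in>W. dyadic_level a = k}"
    and "real (card {a\<in>W. dyadic_level a = k}) \<le> real ((n + 1)\<^sup>2 * 2 ^ k)"
    using card_dyadic_level_le[OF in_disk sep] by (blast, simp only: of_nat_le_iff)
  then show "finite {a\<in>W. dyadic_level a = k}" "card {a\<in>W. dyadic_level a = k} \<le> level_const \<delta> * 2 ^ k"
    unfolding level_const_def n_def by simp_all
qed

lemma sum_le_by_dyadic_level:
  assumes "finite A" "A \<subseteq> W" "\<And>a. a \<in> A \<Longrightarrow> 0 \<le> w a \<and> w a \<le> \<phi> (dyadic_level a)"
  shows "sum w A \<le> (\<Sum>k\<in>dyadic_level ` A. level_const \<delta> * 2 ^ k * \<phi> k)"
proof -
  have "sum w A = (\<Sum>k\<in>dyadic_level ` A. sum w {a\<in>A. dyadic_level a = k})"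
    by (rule sum.image_gen[OF assms(1)])
  also have "\<dots> \<le> (\<Sum>k\<in>dyadic_level ` A. level_const \<delta> * 2 ^ k * \<phi> k)"
  proof (rule sum_mono)
    fix k assume "k \<in> dyadic_level ` A"
    then have "0 \<le> \<phi> k"
      using assms(3) by force
    have sub: "{a\<in>A. dyadic_level a = k} \<subseteq> {a\<in>W. dyadic_level a = k}"
      using assms(2) by auto
    have "sum w {a\<in>A. dyadic_level a = k} \<le> (\<Sum>a\<in>{a\<in>A. dyadic_level a = k}. \<phi> k)"
      using assms(3) by (intro sum_mono) auto
    also have "\<dots> = card {a\<in>A. dyadic_level a = k} * \<phi> k"
      by simp
    also have "\<dots> \<le> card {a\<in>W. dyadic_level a = k} * \<phi> k"
      using card_mono[OF dyadic_level_count(1) sub] \<open>0 \<le> \<phi> k\<close> by (intro mult_right_mono) auto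
    also have "\<dots> \<le> level_const \<delta> * 2 ^ k * \<phi> k"
      using dyadic_level_count(2) \<open>0 \<le> \<phi> k\<close> by (intro mult_right_mono) auto
    finally show "sum w {a\<in>A. dyadic_level a = k} \<le> level_const \<delta> * 2 ^ k * \<phi> k" .
  qed
  finally show ?thesis .
qed

lemma finite_inner:
  assumes "r < 1"
  shows "finite {a\<in>W. norm a < r}"
proof -
  obtain n where n: "1 / (1 - r) < 2 ^ n"
    using real_arch_pow[of 2] by auto
  have "dyadic_level a < n" if "a \<in> W" "norm a < r" for a
  proof -
    have "2 ^ dyadic_level a * (1 - r) < 2 ^ dyadic_level a * (1 - norm a)"
      using that by simp
    also have "\<dots> \<le> 1"
      using dyadic_level_bounds(1) norm_less_1 that(1) by blast
    also have "\<dots> < 2 ^ n * (1 - r)"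
      using n assms by (simp add: field_simps)
    finally show ?thesis
      using assms by simp
  qed
  then have "{a\<in>W. norm a < r} \<subseteq> (\<Union>k<n. {a\<in>W. dyadic_level a = k})"
    by auto
  moreover have "finite (\<Union>k<n. {a\<in>W. dyadic_level a = k})"
    using dyadic_level_count(1) by blast
  ultimately show ?thesis
    by (rule finite_subset)
qed

lemma card_inner_le:
  assumes "r < 1"
  shows "card {a\<in>W. norm a < r} \<le> 2 * level_const \<delta> / (1 - r)"
proof -
  define A where "A = {a\<in>W. norm a < r}"
  have A: "finite A" "A \<subseteq> W"
    unfolding A_def using finite_inner[OF assms] by auto
  have "real (card A) = (\<Sum>a\<in>A. 1)"
    by simp
  also have "\<dots> \<le> (\<Sum>k\<in>dyadic_level ` A. level_const \<delta> * 2 ^ k * 1)"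
    using A by (intro sum_le_by_dyadic_level) auto
  also have "\<dots> = level_const \<delta> * (\<Sum>k\<in>dyadic_level ` A. 2 ^ k)"
    by (simp add: sum_distrib_left)
  also have "\<dots> \<le> level_const \<delta> * (2 / (1 - r))"
  proof (intro mult_left_mono sum_power2_le)
    fix k assume "k \<in> dyadic_level ` A"
    then obtain a where a: "a \<in> A" "k = dyadic_level a"
      by blast
    then have "2 ^ k * (1 - r) < 2 ^ k * (1 - norm a)"
      unfolding A_def by simp
    also have "\<dots> \<le> 1"
      using a A dyadic_level_bounds(1) norm_less_1 by blast
    finally show "2 ^ k * (1 - r) < 1" .
  qed (use A assms less_imp_le[OF level_const_pos] in auto)
  also have "\<dots> = 2 * level_const \<delta> / (1 - r)"
    by simp
  finally show ?thesis
    unfolding A_def .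
qed

lemma sum_outer_one_minus_norm_sq_le:
  assumes "r < 1" "finite A" "A \<subseteq> {a\<in>W. r \<le> norm a}"
  shows "(\<Sum>a\<in>A. (1 - norm a)\<^sup>2) \<le> 4 * level_const \<delta> * (1 - r)"
proof -
  have AW: "A \<subseteq> W"
    using assms(3) by auto
  have "(\<Sum>a\<in>A. (1 - norm a)\<^sup>2) \<le> (\<Sum>k\<in>dyadic_level ` A. level_const \<delta> * 2 ^ k * ((1/2) ^ k * (1/2) ^ k))"
  proof (rule sum_le_by_dyadic_level[OF assms(2) AW])
    fix a assume "a \<in> A"
    then have a: "norm a < 1"
      using AW norm_less_1 by blast
    then have "1 - norm a \<le> (1/2) ^ dyadic_level a"
      using dyadic_level_bounds(1)[OF a] by (simp add: power_one_over field_simps)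
    then have "(1 - norm a)\<^sup>2 \<le> ((1/2) ^ dyadic_level a)\<^sup>2"
      using a by (intro power_mono) auto
    then show "0 \<le> (1 - norm a)\<^sup>2 \<and> (1 - norm a)\<^sup>2 \<le> (1/2) ^ dyadic_level a * (1/2) ^ dyadic_level a"
      by (simp add: power2_eq_square)
  qed
  also have "\<dots> = level_const \<delta> * (\<Sum>k\<in>dyadic_level ` A. (1/2) ^ k)"
    by (simp add: sum_distrib_left power_one_over)
  also have "\<dots> \<le> level_const \<delta> * (4 * (1 - r))"
  proof (intro mult_left_mono sum_power_half_le)
    fix k assume "k \<in> dyadic_level ` A"
    then obtain a where a: "a \<in> A" "k = dyadic_level a"
      by blast
    then have "1 < 2 ^ Suc k * (1 - norm a)"
      using AW dyadic_level_bounds(2) norm_less_1 by blast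
    also have "\<dots> \<le> 2 ^ Suc k * (1 - r)"
      using a assms(3) by (intro mult_left_mono) auto
    finally show "1 < 2 ^ Suc k * (1 - r)" .
  qed (use assms less_imp_le[OF level_const_pos] in auto)
  finally show ?thesis
    by (simp add: algebra_simps)
qed

lemma summable_one_minus_norm_sq_sq: "(\<lambda>a. (1 - (norm a)\<^sup>2)\<^sup>2) summable_on W"
proof (rule nonneg_bdd_above_summable_on)
  show "bdd_above (sum (\<lambda>a. (1 - (norm a)\<^sup>2)\<^sup>2) ` {F. F \<subseteq> W \<and> finite F})"
  proof (rule bdd_aboveI2)
    fix F assume F: "F \<in> {F. F \<subseteq> W \<and> finite F}"
    have "(\<Sum>a\<in>F. (1 - (norm a)\<^sup>2)\<^sup>2) \<le> (\<Sum>a\<in>F. 4 * (1 - norm a)\<^sup>2)"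
      using F norm_less_1 by (intro sum_mono one_minus_norm_sq_sq_le) (auto simp: less_imp_le)
    also have "\<dots> = 4 * (\<Sum>a\<in>F. (1 - norm a)\<^sup>2)"
      by (simp add: sum_distrib_left)
    also have "\<dots> \<le> 4 * (4 * level_const \<delta> * (1 - 0))"
      using F by (intro mult_left_mono sum_outer_one_minus_norm_sq_le) auto
    finally show "(\<Sum>a\<in>F. (1 - (norm a)\<^sup>2)\<^sup>2) \<le> 16 * level_const \<delta>"
      by simp
  qed
qed simp

end

section \<open>Circle means of \<open>k\<^sub>W\<close>\<close>

lemma Re_one_plus_divide_one_minus:
  fixes w :: complex
  shows "Re ((1 + w) / (1 - w)) = (1 - (norm w)\<^sup>2) / (norm (1 - w))\<^sup>2"
proof -
  have "Re ((1 + w) / (1 - w)) = ((1 + Re w) * (1 - Re w) + Im w * (- Im w)) / (norm (1 - w))\<^sup>2"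
    by (simp add: Re_divide')
  also have "\<dots> = (1 - (norm w)\<^sup>2) / (norm (1 - w))\<^sup>2"
    using cmod_power2[of w] by (simp add: algebra_simps power2_eq_square)
  finally show ?thesis .
qed

lemma poisson_primitive_has_derivative:
  fixes c :: complex
  assumes c: "norm c < 1"
  shows "((\<lambda>z. z + 2 * \<i> * Ln (1 - c * exp (\<i> * z)))
    has_field_derivative (1 + c * cis t) / (1 - c * cis t)) (at (of_real t))"
proof -
  define z where "z = complex_of_real t"
  have exp: "exp (\<i> * z) = cis t"
    by (simp add: z_def cis_conv_exp)
  have "\<bar>Re (c * cis t)\<bar> < 1"
    using abs_Re_le_cmod[of "c * cis t"] c by (simp add: norm_mult)
  then have re_pos: "0 < Re (1 - c * cis t)"
    by simp
  then have nz: "1 - c * cis t \<noteq> 0"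
    by (metis less_irrefl zero_complex.sel(1))
  have "((\<lambda>z. 1 - c * exp (\<i> * z)) has_field_derivative - c * (\<i> * exp (\<i> * z))) (at z)"
    by (auto intro!: derivative_eq_intros)
  moreover have "(Ln has_field_derivative inverse (1 - c * exp (\<i> * z))) (at (1 - c * exp (\<i> * z)))"
    using re_pos unfolding exp by (intro has_field_derivative_Ln) (auto simp: complex_nonpos_Reals_iff)
  ultimately have "((\<lambda>z. Ln (1 - c * exp (\<i> * z)))
      has_field_derivative inverse (1 - c * exp (\<i> * z)) * (- c * (\<i> * exp (\<i> * z)))) (at z)"
    by (rule DERIV_chain2[rotated])
  then have "((\<lambda>z. z + 2 * \<i> * Ln (1 - c * exp (\<i> * z)))
      has_field_derivative 1 + 2 * \<i> * (inverse (1 - c * cis t) * (- c * (\<i> * cis t)))) (at z)"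
    unfolding exp by (intro derivative_intros DERIV_cmult)
  moreover have "1 + 2 * \<i> * (inverse (1 - c * cis t) * (- c * (\<i> * cis t))) = (1 + c * cis t) / (1 - c * cis t)"
    using nz by (simp add: field_simps)
  ultimately show ?thesis
    by (simp add: z_def)
qed

text \<open>The real part of \<open>(1 + c e\<^sup>i\<^sup>t) / (1 - c e\<^sup>i\<^sup>t)\<close> is the Poisson kernel, and its primitive
  above gains exactly \<open>2\<pi>\<close> over a period.\<close>
lemma poisson_kernel_has_integral:
  fixes c :: complex
  assumes c: "norm c < 1"
  shows "((\<lambda>t. (1 - (norm c)\<^sup>2) / (norm (1 - c * cis t))\<^sup>2) has_integral 2 * pi) {0..2 * pi}"
proof -
  define G where "G z = z + 2 * \<i> * Ln (1 - c * exp (\<i> * z))" for z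
  define P where "P t = (1 + c * cis t) / (1 - c * cis t)" for t
  have "((\<lambda>t. G (of_real t)) has_vector_derivative P t) (at t within {0..2 * pi})" for t
    unfolding G_def P_def using poisson_primitive_has_derivative[OF c]
    by (intro has_vector_derivative_real_field) auto
  then have "(P has_integral G (of_real (2 * pi)) - G (of_real 0)) {0..2 * pi}"
    by (intro fundamental_theorem_of_calculus) simp_all
  moreover have "exp (\<i> * (2 * complex_of_real pi)) = 1"
    using exp_two_pi_i by (simp add: mult.commute mult.left_commute)
  then have "G (of_real (2 * pi)) - G (of_real 0) = 2 * pi"
    by (simp add: G_def)
  ultimately have "(P has_integral of_real (2 * pi)) {0..2 * pi}"
    by simp
  from has_integral_linear[OF this bounded_linear_Re]
  have "((\<lambda>t. Re (P t)) has_integral 2 * pi) {0..2 * pi}"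
    by (simp add: o_def)
  moreover have "Re (P t) = (1 - (norm c)\<^sup>2) / (norm (1 - c * cis t))\<^sup>2" for t
    using Re_one_plus_divide_one_minus[of "c * cis t"] by (simp add: P_def norm_mult)
  ultimately show ?thesis
    by simp
qed

lemma abs_infsum_minus_sum_le:
  fixes g e :: "'a \<Rightarrow> real"
  assumes e: "e summable_on A" and bound: "\<And>a. a \<in> A \<Longrightarrow> \<bar>g a\<bar> \<le> e a"
    and B: "finite B" "B \<subseteq> A"
  shows "\<bar>(\<Sum>\<^sub>\<infinity>a\<in>A. g a) - sum g B\<bar> \<le> (\<Sum>\<^sub>\<infinity>a\<in>A. e a) - sum e B"
proof -
  have norm_g: "(\<lambda>a. norm (g a)) summable_on A"
    using bound by (intro summable_on_comparison_test[OF e]) auto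
  have g: "g summable_on C" if "C \<subseteq> A" for C
    using summable_on_subset_banach[OF norm_g that] by (rule abs_summable_summable)
  have "(\<Sum>\<^sub>\<infinity>a\<in>A. g a) - sum g B = (\<Sum>\<^sub>\<infinity>a\<in>A - B. g a)"
    using B g by (simp add: infsum_Diff)
  moreover have "(\<Sum>\<^sub>\<infinity>a\<in>A. e a) - sum e B = (\<Sum>\<^sub>\<infinity>a\<in>A - B. e a)"
    using B e by (simp add: infsum_Diff)
  moreover have "norm (\<Sum>\<^sub>\<infinity>a\<in>A - B. g a) \<le> (\<Sum>\<^sub>\<infinity>a\<in>A - B. e a)"
    using bound g[of "A - B"] summable_on_subset_banach[OF e, of "A - B"]
    by (intro norm_infsum_le[OF has_sum_infsum has_sum_infsum]) auto
  ultimately show ?thesis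
    by simp
qed

lemma uniform_limit_infsum:
  fixes f :: "'a \<Rightarrow> 'b \<Rightarrow> real" and e :: "'a \<Rightarrow> real"
  assumes e: "e summable_on A" and bound: "\<And>a t. a \<in> A \<Longrightarrow> t \<in> S \<Longrightarrow> \<bar>f a t\<bar> \<le> e a"
  shows "uniform_limit S (\<lambda>B t. \<Sum>a\<in>B \<inter> A. f a t) (\<lambda>t. \<Sum>\<^sub>\<infinity>a\<in>A. f a t)
    (finite_subsets_at_top A)"
proof (rule uniform_limitI)
  fix \<epsilon> :: real assume "0 < \<epsilon>"
  then have "\<forall>\<^sub>F B in finite_subsets_at_top A. dist (sum e B) (\<Sum>\<^sub>\<infinity>a\<in>A. e a) < \<epsilon>"
    using infsum_tendsto[OF e] unfolding tendsto_iff by blast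
  moreover have "\<forall>\<^sub>F B in finite_subsets_at_top A. finite B \<and> B \<subseteq> A"
    by (rule eventually_finite_subsets_at_top_weakI) simp
  ultimately show "\<forall>\<^sub>F B in finite_subsets_at_top A.
      \<forall>t\<in>S. dist (\<Sum>a\<in>B \<inter> A. f a t) (\<Sum>\<^sub>\<infinity>a\<in>A. f a t) < \<epsilon>"
  proof eventually_elim
    case (elim B)
    then have "B \<inter> A = B"
      by auto
    with elim abs_infsum_minus_sum_le[OF e bound] show ?case
      by (force simp: dist_real_def abs_minus_commute)
  qed
qed

lemma has_integral_infsum:
  fixes f :: "'a \<Rightarrow> real \<Rightarrow> real" and e I :: "'a \<Rightarrow> real"
  assumes e: "e summable_on A"
    and bound: "\<And>a t. a \<in> A \<Longrightarrow> t \<in> {c..d} \<Longrightarrow> \<bar>f a t\<bar> \<le> e a"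
    and cont: "\<And>a. a \<in> A \<Longrightarrow> continuous_on {c..d} (f a)"
    and int: "\<And>a. a \<in> A \<Longrightarrow> (f a has_integral I a) {c..d}"
  shows "((\<lambda>t. \<Sum>\<^sub>\<infinity>a\<in>A. f a t) has_integral (\<Sum>\<^sub>\<infinity>a\<in>A. I a)) {c..d}"
proof -
  have "continuous_on {c..d} (\<lambda>t. \<Sum>a\<in>B \<inter> A. f a t)" for B
    using cont by (intro continuous_intros) auto
  from uniform_limit_integral[OF uniform_limit_infsum[OF e bound] this] obtain I' J
    where I': "\<And>B. ((\<lambda>t. \<Sum>a\<in>B \<inter> A. f a t) has_integral I' B) {c..d}"
      and J: "((\<lambda>t. \<Sum>\<^sub>\<infinity>a\<in>A. f a t) has_integral J) {c..d}"
      and lim: "(I' \<longlongrightarrow> J) (finite_subsets_at_top A)"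
    by auto
  have "\<forall>\<^sub>F B in finite_subsets_at_top A. I' B = sum I B"
  proof (rule eventually_finite_subsets_at_top_weakI)
    fix B assume "finite B" "B \<subseteq> A"
    then have "((\<lambda>t. \<Sum>a\<in>B \<inter> A. f a t) has_integral sum I B) {c..d}"
      using int by (auto intro: has_integral_sum simp: Int_absorb2)
    then show "I' B = sum I B"
      using I' has_integral_unique by blast
  qed
  with lim have "(I has_sum J) A"
    unfolding has_sum_def by (rule Lim_transform_eventually)
  then show ?thesis
    using J infsumI by metis
qed

definition circle_mean_weight :: "real \<Rightarrow> complex \<Rightarrow> real" where
  "circle_mean_weight r a = (1 - (norm a)\<^sup>2)\<^sup>2 / (1 - (norm a)\<^sup>2 * r\<^sup>2)"

lemma circle_term_has_integral:
  assumes "norm a \<le> 1" "0 \<le> r" "r < 1"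
  shows "((\<lambda>t. (1 - (norm a)\<^sup>2)\<^sup>2 / (norm (1 - cnj a * (complex_of_real r * cis t)))\<^sup>2)
    has_integral 2 * pi * circle_mean_weight r a) {0..2 * pi}"
proof -
  define c where "c = cnj a * complex_of_real r"
  have "norm c = norm a * r"
    using assms by (simp add: c_def norm_mult)
  also have "\<dots> \<le> 1 * r"
    using assms by (intro mult_right_mono) auto
  finally have "norm c < 1"
    using assms by simp
  then have "0 < 1 - (norm c)\<^sup>2"
    by (simp add: abs_square_less_1)
  moreover have norm_c: "1 - (norm c)\<^sup>2 = 1 - (norm a)\<^sup>2 * r\<^sup>2"
    using assms by (simp add: c_def norm_mult power_mult_distrib)
  ultimately have "(\<lambda>t. (1 - (norm a)\<^sup>2)\<^sup>2 / (norm (1 - cnj a * (complex_of_real r * cis t)))\<^sup>2)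
      = (\<lambda>t. (1 - (norm a)\<^sup>2)\<^sup>2 / (1 - (norm c)\<^sup>2) * ((1 - (norm c)\<^sup>2) / (norm (1 - c * cis t))\<^sup>2))"
    unfolding c_def by (simp add: fun_eq_iff mult.assoc)
  moreover have "((\<lambda>t. (1 - (norm a)\<^sup>2)\<^sup>2 / (1 - (norm c)\<^sup>2) * ((1 - (norm c)\<^sup>2) / (norm (1 - c * cis t))\<^sup>2))
      has_integral (1 - (norm a)\<^sup>2)\<^sup>2 / (1 - (norm c)\<^sup>2) * (2 * pi)) {0..2 * pi}"
    using poisson_kernel_has_integral[OF \<open>norm c < 1\<close>] by (rule has_integral_mult_right)
  ultimately show ?thesis
    unfolding circle_mean_weight_def norm_c[symmetric] by (simp add: mult.commute)
qed

lemma kfun_circle_mean: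
  assumes W: "W \<subseteq> ball 0 1" and summable: "(\<lambda>a. (1 - (norm a)\<^sup>2)\<^sup>2) summable_on W"
    and r: "0 \<le> r" "r < 1"
  shows "1 / (2 * pi) * integral {0..2 * pi} (\<lambda>\<theta>. kfun W (complex_of_real r * cis \<theta>))
    = r\<^sup>2 / 2 * (\<Sum>\<^sub>\<infinity>a\<in>W. circle_mean_weight r a)"
proof -
  define f where "f a t = (1 - (norm a)\<^sup>2)\<^sup>2 / (norm (1 - cnj a * (complex_of_real r * cis t)))\<^sup>2" for a t
  have den: "(1 - r)\<^sup>2 \<le> (norm (1 - cnj a * (complex_of_real r * cis t)))\<^sup>2" if "a \<in> W" for a t
    using norm_one_minus_cnj_mult_ge[of a "complex_of_real r * cis t"] that W r
    by (intro power_mono) (auto simp: norm_mult)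
  have "0 < (1 - r)\<^sup>2"
    using r by simp
  then have den_pos: "0 < (norm (1 - cnj a * (complex_of_real r * cis t)))\<^sup>2" if "a \<in> W" for a t
    using den[OF that, of t] by linarith
  have "\<bar>f a t\<bar> \<le> (1 - (norm a)\<^sup>2)\<^sup>2 / (1 - r)\<^sup>2" if "a \<in> W" for a t
  proof -
    have "f a t \<le> (1 - (norm a)\<^sup>2)\<^sup>2 / (1 - r)\<^sup>2"
      unfolding f_def using den[OF that] den_pos[OF that] \<open>0 < (1 - r)\<^sup>2\<close>
      by (intro divide_left_mono mult_pos_pos) auto
    then show ?thesis
      by (simp add: f_def)
  qed
  moreover have "(\<lambda>a. (1 - (norm a)\<^sup>2)\<^sup>2 / (1 - r)\<^sup>2) summable_on W"
    using summable_on_cmult_left[OF summable, of "inverse ((1 - r)\<^sup>2)"] by (simp add: divide_inverse)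
  moreover have "continuous_on {0..2 * pi} (f a)" if "a \<in> W" for a
    unfolding f_def using den_pos[OF that] by (intro continuous_intros) (auto simp del: zero_less_power2)
  moreover have "(f a has_integral 2 * pi * circle_mean_weight r a) {0..2 * pi}" if "a \<in> W" for a
    unfolding f_def using that W r by (intro circle_term_has_integral) auto
  ultimately have "((\<lambda>t. \<Sum>\<^sub>\<infinity>a\<in>W. f a t)
      has_integral (\<Sum>\<^sub>\<infinity>a\<in>W. 2 * pi * circle_mean_weight r a)) {0..2 * pi}"
    by (intro has_integral_infsum) blast+
  then have "((\<lambda>t. r\<^sup>2 / 2 * (\<Sum>\<^sub>\<infinity>a\<in>W. f a t))
      has_integral r\<^sup>2 / 2 * (2 * pi * (\<Sum>\<^sub>\<infinity>a\<in>W. circle_mean_weight r a))) {0..2 * pi}"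
    unfolding infsum_cmult_right' by (rule has_integral_mult_right)
  moreover have "(\<lambda>t. kfun W (complex_of_real r * cis t)) = (\<lambda>t. r\<^sup>2 / 2 * (\<Sum>\<^sub>\<infinity>a\<in>W. f a t))"
    using r by (simp add: fun_eq_iff kfun_def f_def norm_mult)
  ultimately have "((\<lambda>t. kfun W (complex_of_real r * cis t))
      has_integral r\<^sup>2 / 2 * (2 * pi * (\<Sum>\<^sub>\<infinity>a\<in>W. circle_mean_weight r a))) {0..2 * pi}"
    by simp
  then show ?thesis
    by (simp add: integral_unique)
qed

section \<open>Comparison of the counting sum with the circle mean\<close>

lemma circle_mean_weight_bounds:
  assumes "norm a \<le> 1" "0 \<le> r" "r < 1"
  shows "0 \<le> circle_mean_weight r a" "circle_mean_weight r a \<le> (1 - (norm a)\<^sup>2)\<^sup>2 / (1 - r)"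
proof -
  have "(norm a)\<^sup>2 \<le> 1" "r\<^sup>2 \<le> r"
    using assms by (auto simp: power2_eq_square intro: mult_le_one mult_left_le_one_le)
  then have "(norm a)\<^sup>2 * r\<^sup>2 \<le> 1 * r"
    using assms by (intro mult_mono) auto
  then have "1 - r \<le> 1 - (norm a)\<^sup>2 * r\<^sup>2"
    by simp
  then show "0 \<le> circle_mean_weight r a" "circle_mean_weight r a \<le> (1 - (norm a)\<^sup>2)\<^sup>2 / (1 - r)"
    unfolding circle_mean_weight_def using assms(3) by (auto intro: divide_left_mono)
qed

text \<open>Applied with \<open>s = |a|\<^sup>2\<close> and \<open>t = r\<^sup>2\<close>; the difference equals
  \<open>(1 - s)(1 - t) / (2 (1 - s t))\<close>.\<close>
lemma inner_term_bounds:
  fixes s t :: real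
  assumes s: "0 \<le> s" "s < 1" and t: "0 \<le> t" "t < 1"
  shows "0 \<le> (1 - s) / 2 - t / 2 * ((1 - s)\<^sup>2 / (1 - s * t))"
    and "(1 - s) / 2 - t / 2 * ((1 - s)\<^sup>2 / (1 - s * t)) \<le> (1 - t) / 2"
proof -
  have "s * t \<le> s"
    using s t by (intro mult_left_le) auto
  then have st: "s * t < 1"
    using s by linarith
  define q where "q = (1 - s) / (1 - s * t)"
  have eq: "(1 - s) / 2 - t / 2 * ((1 - s)\<^sup>2 / (1 - s * t)) = q * ((1 - t) / 2)"
    unfolding q_def using st by (simp add: field_simps power2_eq_square)
  have "0 \<le> q" "q \<le> 1"
    unfolding q_def using s \<open>s * t \<le> s\<close> st by auto
  moreover have "0 \<le> (1 - t) / 2"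
    using t by simp
  ultimately show "0 \<le> (1 - s) / 2 - t / 2 * ((1 - s)\<^sup>2 / (1 - s * t))"
    and "(1 - s) / 2 - t / 2 * ((1 - s)\<^sup>2 / (1 - s * t)) \<le> (1 - t) / 2"
    unfolding eq using mult_right_mono[of q 1 "(1 - t) / 2"] by auto
qed

context separated_disk_set
begin

lemma summable_circle_mean_weight:
  assumes "0 \<le> r" "r < 1"
  shows "circle_mean_weight r summable_on W"
proof (rule summable_on_comparison_test)
  show "(\<lambda>a. (1 - (norm a)\<^sup>2)\<^sup>2 * (1 / (1 - r))) summable_on W"
    by (rule summable_on_cmult_left[OF summable_one_minus_norm_sq_sq])
qed (use assms circle_mean_weight_bounds norm_less_1 in \<open>auto simp: less_imp_le\<close>)

lemma infsum_outer_circle_mean_weight_le: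
  assumes "0 \<le> r" "r < 1"
  shows "(\<Sum>\<^sub>\<infinity>a\<in>{a\<in>W. r \<le> norm a}. circle_mean_weight r a) \<le> 16 * level_const \<delta>"
proof (rule infsum_le_finite_sums)
  show "circle_mean_weight r summable_on {a\<in>W. r \<le> norm a}"
    using summable_circle_mean_weight[OF assms] by (rule summable_on_subset_banach) auto
next
  fix F assume F: "finite F" "F \<subseteq> {a\<in>W. r \<le> norm a}"
  have "circle_mean_weight r a \<le> 4 * (1 - norm a)\<^sup>2 / (1 - r)" if "a \<in> W" for a
  proof -
    have "norm a \<le> 1"
      using norm_less_1[OF that] by simp
    then have "circle_mean_weight r a \<le> (1 - (norm a)\<^sup>2)\<^sup>2 / (1 - r)"
      using circle_mean_weight_bounds(2) assms by blast
    also have "\<dots> \<le> 4 * (1 - norm a)\<^sup>2 / (1 - r)"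
      using one_minus_norm_sq_sq_le[OF \<open>norm a \<le> 1\<close>] assms by (intro divide_right_mono) auto
    finally show ?thesis .
  qed
  then have "sum (circle_mean_weight r) F \<le> (\<Sum>a\<in>F. 4 * (1 - norm a)\<^sup>2 / (1 - r))"
    using F by (intro sum_mono) auto
  also have "\<dots> = 4 / (1 - r) * (\<Sum>a\<in>F. (1 - norm a)\<^sup>2)"
    by (simp add: sum_distrib_left)
  also have "\<dots> \<le> 4 / (1 - r) * (4 * level_const \<delta> * (1 - r))"
    using assms F by (intro mult_left_mono sum_outer_one_minus_norm_sq_le) auto
  also have "\<dots> = 16 * level_const \<delta>"
    using assms by simp
  finally show "sum (circle_mean_weight r) F \<le> 16 * level_const \<delta>" .
qed

lemma sum_inner_excess_bounds:
  assumes "0 \<le> r" "r < 1"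
  defines "excess a \<equiv> (1 - (norm a)\<^sup>2) / 2 - r\<^sup>2 / 2 * circle_mean_weight r a"
  shows "0 \<le> (\<Sum>a\<in>{a\<in>W. norm a < r}. excess a)"
    and "(\<Sum>a\<in>{a\<in>W. norm a < r}. excess a) \<le> 2 * level_const \<delta>"
proof -
  have excess: "0 \<le> excess a" "excess a \<le> (1 - r\<^sup>2) / 2" if "a \<in> W" for a
    using inner_term_bounds[of "(norm a)\<^sup>2" "r\<^sup>2"] norm_less_1[OF that] assms
    unfolding excess_def circle_mean_weight_def by (auto simp: abs_square_less_1)
  then show "0 \<le> (\<Sum>a\<in>{a\<in>W. norm a < r}. excess a)"
    by (intro sum_nonneg) auto
  have "(\<Sum>a\<in>{a\<in>W. norm a < r}. excess a) \<le> card {a\<in>W. norm a < r} * ((1 - r\<^sup>2) / 2)"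
    using excess sum_mono[of "{a\<in>W. norm a < r}" excess "\<lambda>_. (1 - r\<^sup>2) / 2"] by auto
  also have "\<dots> \<le> 2 * level_const \<delta> / (1 - r) * ((1 - r\<^sup>2) / 2)"
    using card_inner_le assms less_imp_le[OF level_const_pos] abs_square_le_1[of r] by (intro mult_mono) auto
  also have "\<dots> = 2 * level_const \<delta> / (1 - r) * ((1 - r) * (1 + r) / 2)"
    by (simp add: power2_eq_square algebra_simps)
  also have "\<dots> = level_const \<delta> * (1 + r)"
    using assms by (simp add: field_simps)
  also have "\<dots> \<le> level_const \<delta> * 2"
    using assms less_imp_le[OF level_const_pos] by (intro mult_left_mono) auto
  finally show "(\<Sum>a\<in>{a\<in>W. norm a < r}. excess a) \<le> 2 * level_const \<delta>"
    by simp
qed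

lemma density_sum_minus_kfun_mean_bound:
  assumes "0 \<le> r" "r < 1"
  shows "\<bar>(\<Sum>a\<in>{a\<in>W. norm a < r}. (1 - (norm a)\<^sup>2) / 2)
    - 1 / (2 * pi) * integral {0..2 * pi} (\<lambda>\<theta>. kfun W (complex_of_real r * cis \<theta>))\<bar>
    \<le> 8 * level_const \<delta>"
proof -
  define A where "A = {a\<in>W. norm a < r}"
  define B where "B = {a\<in>W. r \<le> norm a}"
  have "W = A \<union> B" "A \<inter> B = {}" "finite A"
    unfolding A_def B_def using finite_inner assms by auto
  then have "(\<Sum>\<^sub>\<infinity>a\<in>W. circle_mean_weight r a)
      = sum (circle_mean_weight r) A + (\<Sum>\<^sub>\<infinity>a\<in>B. circle_mean_weight r a)"
    using summable_circle_mean_weight[OF assms] summable_on_subset_banach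
    by (metis infsum_Un_disjoint infsum_finite sup_ge1 sup_ge2)
  then have "1 / (2 * pi) * integral {0..2 * pi} (\<lambda>\<theta>. kfun W (complex_of_real r * cis \<theta>))
      = (\<Sum>a\<in>A. r\<^sup>2 / 2 * circle_mean_weight r a)
        + r\<^sup>2 / 2 * (\<Sum>\<^sub>\<infinity>a\<in>B. circle_mean_weight r a)"
    using kfun_circle_mean[OF in_disk summable_one_minus_norm_sq_sq assms]
    by (simp add: sum_distrib_left distrib_left)
  then have "(\<Sum>a\<in>A. (1 - (norm a)\<^sup>2) / 2)
      - 1 / (2 * pi) * integral {0..2 * pi} (\<lambda>\<theta>. kfun W (complex_of_real r * cis \<theta>))
      = (\<Sum>a\<in>A. (1 - (norm a)\<^sup>2) / 2 - r\<^sup>2 / 2 * circle_mean_weight r a)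
        - r\<^sup>2 / 2 * (\<Sum>\<^sub>\<infinity>a\<in>B. circle_mean_weight r a)"
    by (simp add: sum_subtractf)
  moreover have "0 \<le> (\<Sum>\<^sub>\<infinity>a\<in>B. circle_mean_weight r a)"
    using assms norm_less_1 circle_mean_weight_bounds(1) unfolding B_def
    by (intro infsum_nonneg) (auto simp: less_imp_le)
  moreover have "r\<^sup>2 * (\<Sum>\<^sub>\<infinity>a\<in>B. circle_mean_weight r a) \<le> 1 * (16 * level_const \<delta>)"
    using infsum_outer_circle_mean_weight_le[OF assms] assms \<open>0 \<le> (\<Sum>\<^sub>\<infinity>a\<in>B. _)\<close>
    unfolding B_def by (intro mult_mono) (auto simp: abs_square_le_1)
  ultimately have "0 \<le> r\<^sup>2 / 2 * (\<Sum>\<^sub>\<infinity>a\<in>B. circle_mean_weight r a)"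
    and "r\<^sup>2 / 2 * (\<Sum>\<^sub>\<infinity>a\<in>B. circle_mean_weight r a) \<le> 8 * level_const \<delta>"
    by simp_all
  then show ?thesis
    using sum_inner_excess_bounds[OF assms] level_const_pos[of \<delta>] \<open>(\<Sum>a\<in>A. _) - _ = _\<close>
    unfolding A_def by linarith
qed

end

lemma Mob_image_density_sum_minus_kfun_mean_bound:
  assumes "Z \<subseteq> ball 0 1" "0 < \<delta>" "separated_by \<delta> Z" "b \<in> ball 0 1" "0 \<le> r" "r < 1"
  shows "\<bar>(\<Sum>a\<in>{a\<in>Mob b ` Z. norm a < r}. (1 - (norm a)\<^sup>2) / 2)
    - 1 / (2 * pi) * integral {0..2 * pi} (\<lambda>\<theta>. kfun (Mob b ` Z) (complex_of_real r * cis \<theta>))\<bar>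
    \<le> 8 * level_const \<delta>"
proof -
  interpret separated_disk_set "Mob b ` Z" \<delta>
    using assms(1-4) by unfold_locales (auto intro!: norm_Mob_less_1 separated_by_Mob_image simp: subset_iff)
  show ?thesis
    using assms(5,6) by (rule density_sum_minus_kfun_mean_bound)
qed

section \<open>Upper limits\<close>

lemma SUP_ereal_le_SUP_plus:
  assumes "\<And>x. x \<in> A \<Longrightarrow> f x \<le> g x + c"
  shows "(SUP x\<in>A. ereal (f x)) \<le> (SUP x\<in>A. ereal (g x)) + ereal c"
proof (rule SUP_least)
  fix x assume "x \<in> A"
  then have "ereal (f x) \<le> ereal (g x) + ereal c"
    using assms by simp
  also have "\<dots> \<le> (SUP x\<in>A. ereal (g x)) + ereal c"
    using \<open>x \<in> A\<close> by (intro add_right_mono SUP_upper)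
  finally show "ereal (f x) \<le> (SUP x\<in>A. ereal (g x)) + ereal c" .
qed

lemma Limsup_divide_le_of_le_plus:
  fixes D S :: "'a \<Rightarrow> ereal" and L :: "'a \<Rightarrow> real"
  assumes F: "F \<noteq> bot" and L: "filterlim L at_top F"
    and le: "\<forall>\<^sub>F x in F. D x \<le> S x + ereal c"
  shows "Limsup F (\<lambda>x. D x / ereal (L x)) \<le> Limsup F (\<lambda>x. S x / ereal (L x))"
proof (rule ereal_le_epsilon2)
  fix \<epsilon> :: real assume "0 < \<epsilon>"
  have "\<forall>\<^sub>F x in F. max 1 (c / \<epsilon>) \<le> L x"
    using L unfolding filterlim_at_top by blast
  with le have "\<forall>\<^sub>F x in F. D x / ereal (L x) \<le> S x / ereal (L x) + ereal \<epsilon>"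
  proof eventually_elim
    case (elim x)
    then have "0 < L x" "c / L x \<le> \<epsilon>"
      using \<open>0 < \<epsilon>\<close> by (auto simp: field_simps)
    have "D x / ereal (L x) \<le> (S x + ereal c) / ereal (L x)"
      using elim \<open>0 < L x\<close> by (intro ereal_divide_right_mono) auto
    also have "\<dots> = S x / ereal (L x) + ereal (c / L x)"
      using \<open>0 < L x\<close> by (simp add: divide_ereal_def ereal_distrib divide_inverse)
    also have "\<dots> \<le> S x / ereal (L x) + ereal \<epsilon>"
      using \<open>c / L x \<le> \<epsilon>\<close> by (intro add_left_mono) simp
    finally show ?case .
  qed
  then have "Limsup F (\<lambda>x. D x / ereal (L x)) \<le> Limsup F (\<lambda>x. S x / ereal (L x) + ereal \<epsilon>)"
    by (rule Limsup_mono)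
  also have "\<dots> = Limsup F (\<lambda>x. S x / ereal (L x)) + ereal \<epsilon>"
    using F by (rule Limsup_add_ereal_right) simp
  finally show "Limsup F (\<lambda>x. D x / ereal (L x)) \<le> Limsup F (\<lambda>x. S x / ereal (L x)) + ereal \<epsilon>" .
qed

theorem mainTheorem13:
  fixes Z :: "complex set"
  assumes "Z \<subseteq> ball 0 1"
    and "separated Z"
  shows "upper_density Z = upper_S Z"
proof -
  obtain \<delta> where "0 < \<delta>" "separated_by \<delta> Z"
    using assms(2) separated_iff_separated_by by blast
  define C where "C = 8 * level_const \<delta>"
  define count where "count b r = (\<Sum>a\<in>{a\<in>Mob b ` Z. norm a < r}. (1 - (norm a)\<^sup>2) / 2)" for b r
  define mean where "mean b r = 1 / (2 * pi) *
    integral {0..2 * pi} (\<lambda>\<theta>. kfun (Mob b ` Z) (complex_of_real r * cis \<theta>))" for b r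
  have close: "count b r \<le> mean b r + C" "mean b r \<le> count b r + C"
    if "b \<in> ball 0 1" "0 \<le> r" "r < 1" for b r
    using Mob_image_density_sum_minus_kfun_mean_bound[OF assms(1) \<open>0 < \<delta>\<close> \<open>separated_by \<delta> Z\<close> that]
    unfolding count_def mean_def C_def by linarith+
  have "\<forall>\<^sub>F r in at_left 1. 0 \<le> r \<and> r < (1::real)"
    using eventually_at_left_real[of 0 1] by (auto elim: eventually_mono)
  then have "\<forall>\<^sub>F r in at_left 1.
      (SUP b\<in>ball 0 1. ereal (count b r)) \<le> (SUP b\<in>ball 0 1. ereal (mean b r)) + ereal C \<and>
      (SUP b\<in>ball 0 1. ereal (mean b r)) \<le> (SUP b\<in>ball 0 1. ereal (count b r)) + ereal C"
    by eventually_elim (auto intro!: SUP_ereal_le_SUP_plus close)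
  moreover have "filterlim (\<lambda>r::real. ln (1 / (1 - r\<^sup>2))) at_top (at_left 1)"
    by real_asymp
  ultimately show ?thesis
    unfolding upper_density_def upper_S_def count_def[symmetric] mean_def[symmetric]
    by (intro antisym Limsup_divide_le_of_le_plus) (auto elim: eventually_mono)
qed

end
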